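(* Let $G$ be a group with a finite generating set $X$, and let $g\in G$ have infinite order. Then, with respect to the word metric of $X$, $t(g^\infty,g^{-\infty})\ge 1/\sqrt2$, equivalently $s(g^\infty,g^{-\infty})\ge 1/2$.
   Context: $d$ is the word metric of $G$ with respect to $X$ ($d(g,h)$ = length of a shortest word over $X\cup X^{-1}$ representing $g^{-1}h$). For $g$ of infinite order, $g^\infty=\{g^n:n\in\mathbb N\}$ and $g^{-\infty}=(g^{-1})^\infty=\{g^{-n}:n\in\mathbb N\}$. For $\alpha>0$, $c\in\mathbb N$, the $(\alpha,c)$-cone around $g^\infty$ is $\alpha\cdot g^\infty+c=\{v\in G:\exists n\in\mathbb N,\ d(v,g^n)\le\alpha\, d(1,g^n)+c\}$; for a forward orbit $x$ write $x\subseteq\alpha\cdot y+c$ if every element of $x$ lies in the cone around $y$. Define $s(x,y)=\inf\{\alpha>0:\exists c\in\mathbb N,\ x\subseteq\alpha\cdot y+c\text{ and }y\subseteq\alpha\cdot x+c\}$ and $t(x,y)=\sqrt{s(x,y)}$. *)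

theory Defs
  imports "HOL-Algebra.Generated_Groups" Complex_Main
begin

definition word_prod :: "('a, 'b) monoid_scheme \<Rightarrow> 'a list \<Rightarrow> 'a" where
  "word_prod G ws = foldr (\<lambda>x y. x \<otimes>\<^bsub>G\<^esub> y) ws \<one>\<^bsub>G\<^esub>"

definition word_length :: "('a, 'b) monoid_scheme \<Rightarrow> 'a set \<Rightarrow> 'a \<Rightarrow> nat" where
  "word_length G X h = (LEAST n. \<exists>ws. set ws \<subseteq> X \<union> (\<lambda>x. inv\<^bsub>G\<^esub> x) ` X
                                   \<and> length ws = n \<and> word_prod G ws = h)"

definition word_dist :: "('a, 'b) monoid_scheme \<Rightarrow> 'a set \<Rightarrow> 'a \<Rightarrow> 'a \<Rightarrow> nat" where
  "word_dist G X g h = word_length G X (inv\<^bsub>G\<^esub> g \<otimes>\<^bsub>G\<^esub> h)"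

definition fwd_orbit :: "('a, 'b) monoid_scheme \<Rightarrow> 'a \<Rightarrow> 'a set" where
  "fwd_orbit G g = {g [^]\<^bsub>G\<^esub> (n::nat) | n. True}"

definition cone :: "('a, 'b) monoid_scheme \<Rightarrow> 'a set \<Rightarrow> real \<Rightarrow> nat \<Rightarrow> 'a \<Rightarrow> 'a set" where
  "cone G X \<alpha> c g = {v \<in> carrier G. \<exists>n::nat.
      real (word_dist G X v (g [^]\<^bsub>G\<^esub> n))
        \<le> \<alpha> * real (word_dist G X \<one>\<^bsub>G\<^esub> (g [^]\<^bsub>G\<^esub> n)) + real c}"

definition s_orb :: "('a, 'b) monoid_scheme \<Rightarrow> 'a set \<Rightarrow> 'a \<Rightarrow> 'a \<Rightarrow> real" where
  "s_orb G X g h = Inf {\<alpha>. \<alpha> > 0 \<and> (\<exists>c::nat.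
       fwd_orbit G g \<subseteq> cone G X \<alpha> c h \<and> fwd_orbit G h \<subseteq> cone G X \<alpha> c g)}"

definition t_orb :: "('a, 'b) monoid_scheme \<Rightarrow> 'a set \<Rightarrow> 'a \<Rightarrow> 'a \<Rightarrow> real" where
  "t_orb G X g h = sqrt (s_orb G X g h)"

end

theory Submission
  imports Defs
begin

(* Write L k for the word length of g^k.  Since d(g^m, g^{-n}) = L(m+n) and
   d(1, g^{-n}) = L n, the inclusion  g^\<infinity> \<subseteq> \<alpha> g^{-\<infinity>} + c  says: for every m there is an n
   with  L(m+n) \<le> \<alpha> L n + c.  Combined with the triangle inequality L n \<le> L(m+n) + L m this
   gives (1-\<alpha>) L(m+n) \<le> \<alpha> L m + c, so if \<alpha> < 1/2 every power g^m with L m above the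
   threshold c/(1-2\<alpha>) is followed by a strictly shorter power g^{m+n}.  As g has infinite
   order and balls of the word metric are finite, only finitely many powers lie below the
   threshold, and a power of minimal length among the remaining ones contradicts this descent.
   Hence every admissible \<alpha> is at least 1/2; since \<alpha> = 2, c = 0 is admissible (because
   d(g^m, g^{-m}) = L(2m) \<le> 2 L m), the infimum s is at least 1/2 and t = sqrt s \<ge> 1/sqrt 2. *)

context group
begin

subsection \<open>Words and word length\<close>

lemma word_prod_closed: "set ws \<subseteq> carrier G \<Longrightarrow> word_prod G ws \<in> carrier G"
  by (induction ws) (auto simp: word_prod_def)

lemma word_prod_append:
  "set xs \<subseteq> carrier G \<Longrightarrow> set ys \<subseteq> carrier G \<Longrightarrow>
   word_prod G (xs @ ys) = word_prod G xs \<otimes> word_prod G ys"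
  by (induction xs) (auto simp: word_prod_def m_assoc word_prod_closed[unfolded word_prod_def])

lemma word_prod_inverse_word:
  "set ws \<subseteq> carrier G \<Longrightarrow> word_prod G (rev (map (\<lambda>x. inv x) ws)) = inv (word_prod G ws)"
proof (induction ws)
  case Nil then show ?case by (simp add: word_prod_def)
next
  case (Cons a ws)
  have "word_prod G (rev (map (\<lambda>x. inv x) (a # ws)))
      = word_prod G (rev (map (\<lambda>x. inv x) ws) @ [inv a])" by simp
  also have "\<dots> = word_prod G (rev (map (\<lambda>x. inv x) ws)) \<otimes> word_prod G [inv a]"
    using Cons by (intro word_prod_append) auto
  also have "\<dots> = inv (word_prod G ws) \<otimes> inv a"
    using Cons by (simp add: word_prod_def)
  also have "\<dots> = inv (a \<otimes> word_prod G ws)"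
    using Cons word_prod_closed[of ws] by (simp add: inv_mult_group)
  finally show ?case by (simp add: word_prod_def)
qed

lemma generated_has_word:
  assumes "X \<subseteq> carrier G" "h \<in> generate G X"
  shows "\<exists>ws. set ws \<subseteq> X \<union> (\<lambda>x. inv x) ` X \<and> word_prod G ws = h"
  using assms(2)
proof (induction rule: generate.induct)
  case one then show ?case by (intro exI[of _ "[]"]) (simp add: word_prod_def)
next
  case (incl h) then show ?case using assms(1) by (intro exI[of _ "[h]"]) (auto simp: word_prod_def)
next
  case (inv h) then show ?case using assms(1) by (intro exI[of _ "[inv h]"]) (auto simp: word_prod_def)
next
  case (eng h1 h2)
  then obtain w1 w2 where w: "set w1 \<subseteq> X \<union> (\<lambda>x. inv x) ` X" "word_prod G w1 = h1"
    "set w2 \<subseteq> X \<union> (\<lambda>x. inv x) ` X" "word_prod G w2 = h2" by blast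
  moreover have "X \<union> (\<lambda>x. inv x) ` X \<subseteq> carrier G" using assms(1) by auto
  ultimately have "word_prod G (w1 @ w2) = h1 \<otimes> h2"
    by (subst word_prod_append) auto
  with w show ?case by (intro exI[of _ "w1 @ w2"]) auto
qed

lemma word_length_attained:
  assumes "X \<subseteq> carrier G" "generate G X = carrier G" "h \<in> carrier G"
  shows "\<exists>ws. set ws \<subseteq> X \<union> (\<lambda>x. inv x) ` X \<and> length ws = word_length G X h \<and> word_prod G ws = h"
proof -
  have "\<exists>n ws. set ws \<subseteq> X \<union> (\<lambda>x. inv x) ` X \<and> length ws = n \<and> word_prod G ws = h"
    using generated_has_word assms by blast
  then show ?thesis unfolding word_length_def by (rule LeastI_ex)
qed

lemma word_length_le:
  "set ws \<subseteq> X \<union> (\<lambda>x. inv x) ` X \<Longrightarrow> word_prod G ws = h \<Longrightarrow> word_length G X h \<le> length ws"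
  unfolding word_length_def by (intro Least_le) blast

lemma word_length_mult:
  assumes "X \<subseteq> carrier G" "generate G X = carrier G" "a \<in> carrier G" "b \<in> carrier G"
  shows "word_length G X (a \<otimes> b) \<le> word_length G X a + word_length G X b"
proof -
  obtain wa where wa: "set wa \<subseteq> X \<union> (\<lambda>x. inv x) ` X" "length wa = word_length G X a" "word_prod G wa = a"
    using word_length_attained assms by blast
  obtain wb where wb: "set wb \<subseteq> X \<union> (\<lambda>x. inv x) ` X" "length wb = word_length G X b" "word_prod G wb = b"
    using word_length_attained assms by blast
  have "word_prod G (wa @ wb) = a \<otimes> b"
    using wa wb assms(1) by (subst word_prod_append) auto
  then have "word_length G X (a \<otimes> b) \<le> length (wa @ wb)"
    using wa wb by (intro word_length_le) auto
  then show ?thesis using wa wb by simp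
qed

lemma word_length_inv_le:
  assumes "X \<subseteq> carrier G" "generate G X = carrier G" "a \<in> carrier G"
  shows "word_length G X (inv a) \<le> word_length G X a"
proof -
  obtain wa where wa: "set wa \<subseteq> X \<union> (\<lambda>x. inv x) ` X" "length wa = word_length G X a" "word_prod G wa = a"
    using word_length_attained assms by blast
  have alphabet: "X \<union> (\<lambda>x. inv x) ` X \<subseteq> carrier G" using assms(1) by auto
  have "set (rev (map (\<lambda>x. inv x) wa)) \<subseteq> X \<union> (\<lambda>x. inv x) ` X"
  proof
    fix y assume "y \<in> set (rev (map (\<lambda>x. inv x) wa))"
    then obtain x where x: "x \<in> set wa" "y = inv x" by auto
    with wa(1) have "x \<in> X \<or> x \<in> (\<lambda>x. inv x) ` X" by auto
    with x assms(1) show "y \<in> X \<union> (\<lambda>x. inv x) ` X" by auto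
  qed
  moreover have "set wa \<subseteq> carrier G" using wa(1) alphabet by auto
  then have "word_prod G (rev (map (\<lambda>x. inv x) wa)) = inv a"
    using wa(3) by (simp add: word_prod_inverse_word)
  ultimately have "word_length G X (inv a) \<le> length (rev (map (\<lambda>x. inv x) wa))"
    by (rule word_length_le)
  then show ?thesis using wa by simp
qed

lemma word_length_inv:
  assumes "X \<subseteq> carrier G" "generate G X = carrier G" "a \<in> carrier G"
  shows "word_length G X (inv a) = word_length G X a"
  using word_length_inv_le[OF assms] word_length_inv_le[OF assms(1,2), of "inv a"] assms
  by simp

lemma word_ball_finite:
  assumes "X \<subseteq> carrier G" "generate G X = carrier G" "finite X"
  shows "finite {h \<in> carrier G. word_length G X h \<le> R}"
proof -
  let ?W = "{ws. set ws \<subseteq> X \<union> (\<lambda>x. inv x) ` X \<and> length ws \<le> R}"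
  have "{h \<in> carrier G. word_length G X h \<le> R} \<subseteq> word_prod G ` ?W"
  proof
    fix h assume h: "h \<in> {h \<in> carrier G. word_length G X h \<le> R}"
    then obtain ws where "set ws \<subseteq> X \<union> (\<lambda>x. inv x) ` X" "length ws = word_length G X h" "word_prod G ws = h"
      using word_length_attained[OF assms(1,2)] by blast
    moreover have "word_length G X h \<le> R" using h by simp
    ultimately show "h \<in> word_prod G ` ?W" by force
  qed
  moreover have "finite ?W"
    using assms(3) by (intro finite_lists_length_le) auto
  ultimately show ?thesis by (meson finite_imageI finite_subset)
qed

subsection \<open>Powers of an element of infinite order\<close>

lemma pow_inj:
  assumes "g \<in> carrier G" "\<forall>n::nat. n > 0 \<longrightarrow> g [^] n \<noteq> \<one>"
  shows "inj (\<lambda>k::nat. g [^] k)"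
proof -
  have distinct: "g [^] i \<noteq> g [^] j" if "i < j" for i j :: nat
  proof
    assume eq: "g [^] i = g [^] j"
    have "g [^] i \<otimes> g [^] (j - i) = g [^] (i + (j - i))"
      using assms(1) by (simp add: nat_pow_mult)
    also have "\<dots> = g [^] i \<otimes> \<one>" using assms(1) that eq by simp
    finally have "g [^] i \<otimes> g [^] (j - i) = g [^] i \<otimes> \<one>" .
    then have "g [^] (j - i) = \<one>" using assms(1) by simp
    then show False using assms(2) that by auto
  qed
  show ?thesis
    by (rule injI) (metis distinct linorder_neqE_nat)
qed

lemma finite_short_powers:
  assumes "X \<subseteq> carrier G" "generate G X = carrier G" "finite X"
    and "g \<in> carrier G" "\<forall>n::nat. n > 0 \<longrightarrow> g [^] n \<noteq> \<one>"
  shows "finite {k::nat. real (word_length G X (g [^] k)) \<le> K}"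
proof -
  have "finite ((\<lambda>k::nat. g [^] k) -` {h \<in> carrier G. word_length G X h \<le> nat \<lceil>K\<rceil>})"
    by (intro finite_vimageI word_ball_finite pow_inj assms)
  moreover have "{k. real (word_length G X (g [^] k)) \<le> K}
      \<subseteq> (\<lambda>k::nat. g [^] k) -` {h \<in> carrier G. word_length G X h \<le> nat \<lceil>K\<rceil>}"
    using assms(4) by auto linarith
  ultimately show ?thesis by (rule finite_subset[rotated])
qed

lemma word_dist_pow_inv_pow:
  fixes m n :: nat
  assumes "X \<subseteq> carrier G" "generate G X = carrier G" "g \<in> carrier G"
  shows "word_dist G X (g [^] m) (inv g [^] n) = word_length G X (g [^] (m + n))"
proof -
  have "inv (g [^] m) \<otimes> inv g [^] n = inv (g [^] n \<otimes> g [^] m)"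
    using assms(3) by (metis inv_mult_group nat_pow_closed nat_pow_inv)
  also have "\<dots> = inv (g [^] (m + n))"
    using assms(3) by (simp add: nat_pow_mult add.commute)
  finally show ?thesis
    using word_length_inv[OF assms(1,2)] assms(3) by (simp only: word_dist_def nat_pow_closed)
qed

lemma word_dist_one_inv_pow:
  fixes n :: nat
  assumes "X \<subseteq> carrier G" "generate G X = carrier G" "g \<in> carrier G"
  shows "word_dist G X \<one> (inv g [^] n) = word_length G X (g [^] n)"
  using word_dist_pow_inv_pow[OF assms, of 0 n] assms(3) by simp

end

subsection \<open>The descent argument\<close>

lemma no_descent_above_threshold:
  fixes L :: "nat \<Rightarrow> nat" and K :: real
  assumes "finite {k. real (L k) \<le> K}"
    and descent: "\<And>m. real (L m) > K \<Longrightarrow> \<exists>n. L (m + n) < L m"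
  shows False
proof -
  obtain m0 where m0: "{k. real (L k) \<le> K} \<subseteq> {..<m0}"
    using assms(1) by (auto simp: finite_nat_set_iff_bounded lessThan_def)
  obtain ms where ms: "ms \<ge> m0" "\<And>k. k \<ge> m0 \<Longrightarrow> L ms \<le> L k"
    using ex_has_least_nat[of "\<lambda>k. k \<ge> m0" m0 L] by auto
  have "real (L ms) > K"
  proof (rule ccontr)
    assume "\<not> real (L ms) > K"
    then have "ms \<in> {k. real (L k) \<le> K}" by simp
    with m0 have "ms < m0" by blast
    with ms(1) show False by simp
  qed
  then obtain n where "L (ms + n) < L ms" using descent by blast
  moreover have "L ms \<le> L (ms + n)" using ms(1) by (intro ms(2)) simp
  ultimately show False by simp
qed

lemma (in group) cone_descent:
  fixes m :: nat
  assumes "X \<subseteq> carrier G" "generate G X = carrier G" "g \<in> carrier G"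
    and cone: "fwd_orbit G g \<subseteq> cone G X \<alpha> c (inv g)"
    and \<alpha>: "0 < \<alpha>" "\<alpha> < 1/2"
    and long: "real c < (1 - 2 * \<alpha>) * real (word_length G X (g [^] m))"
  shows "\<exists>n. word_length G X (g [^] (m + n)) < word_length G X (g [^] m)"
proof -
  define L where "L k = real (word_length G X (g [^] k))" for k :: nat
  have pow: "g [^] k \<in> carrier G" for k :: nat using assms(3) by simp
  have "g [^] m \<in> cone G X \<alpha> c (inv g)" using cone unfolding fwd_orbit_def by blast
  then obtain n :: nat where "real (word_dist G X (g [^] m) (inv g [^] n))
      \<le> \<alpha> * real (word_dist G X \<one> (inv g [^] n)) + real c"
    unfolding cone_def by blast
  then have close: "L (m + n) \<le> \<alpha> * L n + c"
    unfolding word_dist_pow_inv_pow[OF assms(1-3)] word_dist_one_inv_pow[OF assms(1-3)] L_def .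
  have "g [^] (m + n) = g [^] n \<otimes> g [^] m"
    using assms(3) by (simp add: nat_pow_mult add.commute)
  then have "g [^] n = g [^] (m + n) \<otimes> inv (g [^] m)"
    using pow by (simp add: m_assoc)
  then have "word_length G X (g [^] n) \<le> word_length G X (g [^] (m + n)) + word_length G X (g [^] m)"
    using word_length_mult[OF assms(1,2) pow inv_closed[OF pow]] word_length_inv[OF assms(1,2) pow]
    by simp
  then have "L n \<le> L (m + n) + L m" unfolding L_def by linarith
  then have "\<alpha> * L n \<le> \<alpha> * (L (m + n) + L m)"
    using \<alpha>(1) by (intro mult_left_mono) auto
  with close have "(1 - \<alpha>) * L (m + n) \<le> \<alpha> * L m + c"
    unfolding left_diff_distrib distrib_left by linarith
  also have "\<dots> < (1 - \<alpha>) * L m"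
    using long unfolding L_def left_diff_distrib by linarith
  finally have "L (m + n) < L m"
    by (rule mult_left_less_imp_less) (use \<alpha> in simp)
  then show ?thesis unfolding L_def of_nat_less_iff by blast
qed

lemma (in group) cone_aperture_lower_bound:
  assumes "X \<subseteq> carrier G" "finite X" "generate G X = carrier G" "g \<in> carrier G"
    and "\<forall>n::nat. n > 0 \<longrightarrow> g [^] n \<noteq> \<one>"
    and cone: "fwd_orbit G g \<subseteq> cone G X \<alpha> c (inv g)" and "0 < \<alpha>"
  shows "\<alpha> \<ge> 1/2"
proof (rule ccontr)
  assume "\<not> \<alpha> \<ge> 1/2"
  then have \<alpha>: "\<alpha> < 1/2" by simp
  define K where "K = real c / (1 - 2 * \<alpha>)"
  show False
  proof (rule no_descent_above_threshold)
    show "finite {k::nat. real (word_length G X (g [^] k)) \<le> K}"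
      by (rule finite_short_powers[OF assms(1,3,2,4,5)])
    fix m :: nat assume "K < real (word_length G X (g [^] m))"
    then have "real c < (1 - 2 * \<alpha>) * real (word_length G X (g [^] m))"
      using \<alpha> by (simp add: K_def pos_divide_less_eq mult.commute)
    then show "\<exists>n::nat. word_length G X (g [^] (m + n)) < word_length G X (g [^] m)"
      by (rule cone_descent[OF assms(1,3,4) cone assms(7) \<alpha>])
  qed
qed

text \<open>Conversely, the (2,0)-cone around g^{-\<infinity>} always contains g^\<infinity>, since
  d(g^m, g^{-m}) = |g^{2m}| \<le> 2|g^m|; so the infimum defining s is over a nonempty set.\<close>
lemma (in group) orbit_in_cone_two:
  assumes "X \<subseteq> carrier G" "generate G X = carrier G" "g \<in> carrier G"
  shows "fwd_orbit G g \<subseteq> cone G X 2 0 (inv g)"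
proof
  fix v assume "v \<in> fwd_orbit G g"
  then obtain m :: nat where v: "v = g [^] m" unfolding fwd_orbit_def by blast
  have pow: "g [^] k \<in> carrier G" for k :: nat using assms(3) by simp
  have "g [^] (m + m) = g [^] m \<otimes> g [^] m" using assms(3) by (simp add: nat_pow_mult)
  then have "word_length G X (g [^] (m + m)) \<le> 2 * word_length G X (g [^] m)"
    using word_length_mult[OF assms(1,2) pow pow] by (simp add: mult_2)
  then have "real (word_dist G X v (inv g [^] m)) \<le> 2 * real (word_dist G X \<one> (inv g [^] m)) + real 0"
    unfolding v word_dist_pow_inv_pow[OF assms] word_dist_one_inv_pow[OF assms] by simp
  then show "v \<in> cone G X 2 0 (inv g)" unfolding cone_def using v pow by auto
qed

theorem theorem1p2:
  fixes G (structure) and X :: "'a set" and g :: 'a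
  assumes "group G"
    and "X \<subseteq> carrier G" and "finite X" and "generate G X = carrier G"
    and "g \<in> carrier G"
    and "\<forall>n::nat. n > 0 \<longrightarrow> g [^] n \<noteq> \<one>"
  shows "t_orb G X g (inv g) \<ge> 1 / sqrt 2 \<and> s_orb G X g (inv g) \<ge> 1 / 2"
proof -
  interpret group G by fact
  define S where "S = {\<alpha>. \<alpha> > 0 \<and> (\<exists>c::nat.
       fwd_orbit G g \<subseteq> cone G X \<alpha> c (inv g) \<and> fwd_orbit G (inv g) \<subseteq> cone G X \<alpha> c g)}"
  have "2 \<in> S"
    using orbit_in_cone_two[OF assms(2,4,5)] orbit_in_cone_two[OF assms(2,4) inv_closed[OF assms(5)]]
      assms(5) by (auto simp: S_def)
  moreover have "\<alpha> \<ge> 1/2" if "\<alpha> \<in> S" for \<alpha>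
    using that cone_aperture_lower_bound[OF assms(2,3,4,5,6)] by (auto simp: S_def)
  ultimately have s: "s_orb G X g (inv g) \<ge> 1/2"
    unfolding s_orb_def S_def[symmetric] by (intro cInf_greatest) auto
  have "1 / sqrt 2 = sqrt (1/2 :: real)" by (simp add: real_sqrt_divide)
  also have "\<dots> \<le> t_orb G X g (inv g)" using s by (simp add: t_orb_def)
  finally show ?thesis using s by simp
qed

end
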